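(* Let $(X,\mathcal{E})$ be an unbounded normal ballean. The following conditions are equivalent: (1) every bounded slowly oscillating function $f:X\to\mathbb{R}$ is constant at infinity; (2) the corona $\nu(X,\mathcal{E})$ is a singleton; (3) $(X,\mathcal{E})$ is ultranormal.
   Context: A coarse structure on a set $X$ is a family $\mathcal{E}$ of subsets of $X\times X$ (entourages) such that each $E\in\mathcal{E}$ contains the diagonal $\Delta_X$; $E,E'\in\mathcal{E}$ implies $E\circ E'\in\mathcal{E}$ and $E^{-1}\in\mathcal{E}$; $\Delta_X\subseteq E'\subseteq E\in\mathcal{E}$ implies $E'\in\mathcal{E}$; and every pair $(x,y)$ lies in some $E\in\mathcal{E}$. The pair $(X,\mathcal{E})$ is a ballean. For $E\in\mathcal{E}$, $E[x]=\{y:(x,y)\in E\}$ and $E[A]=\bigcup_{a\in A}E[a]$. A set $Y\subseteq X$ is bounded if $Y\subseteq E[x]$ for some $x\in X$, $E\in\mathcal{E}$; the ballean is unbounded if $X$ is not bounded. $U$ is an asymptotic neighbourhood of $Y$ if $E[Y]\setminus U$ is bounded for every $E\in\mathcal{E}$. Subsets $Y,Z$ are asymptotically disjoint if $E[Y]\cap E[Z]$ is bounded for every $E\in\mathcal{E}$, and asymptotically separated if they have disjoint asymptotic neighbourhoods. The ballean is normal if any two asymptotically disjoint subsets are asymptotically separated, and ultranormal if it is unbounded and no two unbounded subsets are asymptotically disjoint. A function $f:X\to\mathbb{R}$ is slowly oscillating if for every $E\in\mathcal{E}$ and $\varepsilon>0$ there is a bounded $B$ with $\operatorname{diam} f(E[x])<\varepsilon$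 for all $x\in X\setminus B$; it is constant at infinity if there is $c\in\mathbb{R}$ such that for every $\varepsilon>0$ the set $\{x:|f(x)-c|>\varepsilon\}$ is bounded. Corona: give $X$ the discrete topology, identify $\beta X$ with the ultrafilters on $X$, and let $X^\sharp=\{p\in\beta X: \text{every } P\in p \text{ is unbounded}\}$. For $p,q\in X^\sharp$ write $p\parallel q$ if there is $E\in\mathcal{E}$ with $E[Q]\in p$ for every $Q\in q$ (an equivalence relation). Let $\sim$ be the smallest equivalence relation on $X^\sharp$ that is closed in $X^\sharp\times X^\sharp$ and contains $\parallel$. The corona is $\nu(X,\mathcal{E})=X^\sharp/\sim$. *)

theory Defs
  imports "HOL-Analysis.Analysis"
begin

definition ballean :: "'a set \<Rightarrow> ('a \<times> 'a) set set \<Rightarrow> bool" where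
  "ballean X \<E> \<longleftrightarrow>
     (\<forall>E\<in>\<E>. Id_on X \<subseteq> E \<and> E \<subseteq> X \<times> X) \<and>
     (\<forall>E\<in>\<E>. \<forall>E'\<in>\<E>. E O E' \<in> \<E>) \<and>
     (\<forall>E\<in>\<E>. E\<inverse> \<in> \<E>) \<and>
     (\<forall>E\<in>\<E>. \<forall>E'. Id_on X \<subseteq> E' \<and> E' \<subseteq> E \<longrightarrow> E' \<in> \<E>) \<and>
     (\<forall>x\<in>X. \<forall>y\<in>X. \<exists>E\<in>\<E>. (x, y) \<in> E)"

definition bl_bounded :: "'a set \<Rightarrow> ('a \<times> 'a) set set \<Rightarrow> 'a set \<Rightarrow> bool" where
  "bl_bounded X \<E> Y \<longleftrightarrow> Y \<subseteq> X \<and> (Y = {} \<or> (\<exists>x\<in>X. \<exists>E\<in>\<E>. Y \<subseteq> E `` {x}))"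

definition bl_unbounded :: "'a set \<Rightarrow> ('a \<times> 'a) set set \<Rightarrow> bool" where
  "bl_unbounded X \<E> \<longleftrightarrow> \<not> bl_bounded X \<E> X"

definition asymp_nbhd :: "'a set \<Rightarrow> ('a \<times> 'a) set set \<Rightarrow> 'a set \<Rightarrow> 'a set \<Rightarrow> bool" where
  "asymp_nbhd X \<E> U Y \<longleftrightarrow> (\<forall>E\<in>\<E>. bl_bounded X \<E> (E `` Y - U))"

definition asymp_disjoint :: "'a set \<Rightarrow> ('a \<times> 'a) set set \<Rightarrow> 'a set \<Rightarrow> 'a set \<Rightarrow> bool" where
  "asymp_disjoint X \<E> Y Z \<longleftrightarrow> (\<forall>E\<in>\<E>. bl_bounded X \<E> (E `` Y \<inter> E `` Z))"

definition asymp_separated :: "'a set \<Rightarrow> ('a \<times> 'a) set set \<Rightarrow> 'a set \<Rightarrow> 'a set \<Rightarrow> bool" where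
  "asymp_separated X \<E> Y Z \<longleftrightarrow>
     (\<exists>U V. U \<subseteq> X \<and> V \<subseteq> X \<and> U \<inter> V = {} \<and> asymp_nbhd X \<E> U Y \<and> asymp_nbhd X \<E> V Z)"

definition bl_normal :: "'a set \<Rightarrow> ('a \<times> 'a) set set \<Rightarrow> bool" where
  "bl_normal X \<E> \<longleftrightarrow>
     (\<forall>Y Z. Y \<subseteq> X \<and> Z \<subseteq> X \<and> asymp_disjoint X \<E> Y Z \<longrightarrow> asymp_separated X \<E> Y Z)"

definition bl_ultranormal :: "'a set \<Rightarrow> ('a \<times> 'a) set set \<Rightarrow> bool" where
  "bl_ultranormal X \<E> \<longleftrightarrow> bl_unbounded X \<E> \<and>
     (\<forall>Y Z. Y \<subseteq> X \<and> Z \<subseteq> X \<and> \<not> bl_bounded X \<E> Y \<and> \<not> bl_bounded X \<E> Z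
        \<longrightarrow> \<not> asymp_disjoint X \<E> Y Z)"

text \<open>diam f(A) < eps, written without Sup: there is delta < eps bounding all oscillations.\<close>
definition diam_less :: "('a \<Rightarrow> real) \<Rightarrow> 'a set \<Rightarrow> real \<Rightarrow> bool" where
  "diam_less f A \<epsilon> \<longleftrightarrow> (\<exists>\<delta><\<epsilon>. \<forall>y\<in>A. \<forall>z\<in>A. \<bar>f y - f z\<bar> \<le> \<delta>)"

definition slowly_oscillating :: "'a set \<Rightarrow> ('a \<times> 'a) set set \<Rightarrow> ('a \<Rightarrow> real) \<Rightarrow> bool" where
  "slowly_oscillating X \<E> f \<longleftrightarrow>
     (\<forall>E\<in>\<E>. \<forall>\<epsilon>>0. \<exists>B. bl_bounded X \<E> B \<and> (\<forall>x\<in>X - B. diam_less f (E `` {x}) \<epsilon>))"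

definition const_at_infinity :: "'a set \<Rightarrow> ('a \<times> 'a) set set \<Rightarrow> ('a \<Rightarrow> real) \<Rightarrow> bool" where
  "const_at_infinity X \<E> f \<longleftrightarrow>
     (\<exists>c. \<forall>\<epsilon>>0. bl_bounded X \<E> {x\<in>X. \<bar>f x - c\<bar> > \<epsilon>})"

definition bounded_fun_on :: "'a set \<Rightarrow> ('a \<Rightarrow> real) \<Rightarrow> bool" where
  "bounded_fun_on X f \<longleftrightarrow> (\<exists>M. \<forall>x\<in>X. \<bar>f x\<bar> \<le> M)"

text \<open>Ultrafilters on the (discrete) set X, i.e. points of beta X.\<close>
definition ultrafilter_on :: "'a set \<Rightarrow> 'a set set \<Rightarrow> bool" where
  "ultrafilter_on X p \<longleftrightarrow> p \<subseteq> Pow X \<and> X \<in> p \<and> {} \<notin> p \<and>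
     (\<forall>A\<in>p. \<forall>B\<in>p. A \<inter> B \<in> p) \<and>
     (\<forall>A\<in>p. \<forall>B. A \<subseteq> B \<and> B \<subseteq> X \<longrightarrow> B \<in> p) \<and>
     (\<forall>A. A \<subseteq> X \<longrightarrow> A \<in> p \<or> X - A \<in> p)"

definition betaX :: "'a set \<Rightarrow> 'a set set set" where
  "betaX X = {p. ultrafilter_on X p}"

definition beta_topology :: "'a set \<Rightarrow> 'a set set topology" where
  "beta_topology X = topology_generated_by {{p \<in> betaX X. A \<in> p} | A. A \<subseteq> X}"

definition sharp :: "'a set \<Rightarrow> ('a \<times> 'a) set set \<Rightarrow> 'a set set set" where
  "sharp X \<E> = {p \<in> betaX X. \<forall>P\<in>p. \<not> bl_bounded X \<E> P}"

definition sharp_topology :: "'a set \<Rightarrow> ('a \<times> 'a) set set \<Rightarrow> 'a set set topology" where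
  "sharp_topology X \<E> = subtopology (beta_topology X) (sharp X \<E>)"

definition parallel_rel :: "'a set \<Rightarrow> ('a \<times> 'a) set set \<Rightarrow> ('a set set \<times> 'a set set) set" where
  "parallel_rel X \<E> = {(p, q). p \<in> sharp X \<E> \<and> q \<in> sharp X \<E> \<and> (\<exists>E\<in>\<E>. \<forall>Q\<in>q. E `` Q \<in> p)}"

definition corona_rel :: "'a set \<Rightarrow> ('a \<times> 'a) set set \<Rightarrow> ('a set set \<times> 'a set set) set" where
  "corona_rel X \<E> = \<Inter>{R. equiv (sharp X \<E>) R \<and>
       closedin (prod_topology (sharp_topology X \<E>) (sharp_topology X \<E>)) R \<and>
       parallel_rel X \<E> \<subseteq> R}"

definition corona :: "'a set \<Rightarrow> ('a \<times> 'a) set set \<Rightarrow> 'a set set set set" where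
  "corona X \<E> = sharp X \<E> // corona_rel X \<E>"

end

theory Submission
  imports Defs
begin

text \<open>
  If the ballean is ultranormal, the sub-level sets of a slowly oscillating function below and
  above two distinct values are asymptotically disjoint, so one of them is bounded and the
  supremum of the values with bounded sub-level set is the constant at infinity; and any two
  points of \<open>X\<^sup>\<sharp>\<close> are connected through a common \<open>\<parallel>\<close>-neighbour, found by lifting an ultrafilter
  through an entourage witnessing that two chosen members are not asymptotically disjoint.
  Conversely, two unbounded asymptotically disjoint sets \<open>Y\<close>, \<open>Z\<close> are separated by a dyadic scale
  of sets \<open>U(k/2\<^sup>n)\<close> from \<open>Y - Z\<close> to \<open>X - Z\<close>, each asymptotically inside the next, obtained from
  normality as in Urysohn's lemma. The associated Urysohn function is slowly oscillating but not
  constant at infinity, and "\<open>U(s) \<in> p\<close> implies \<open>U(t) \<in> q\<close> whenever \<open>s < t\<close>, and symmetrically"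
  is a closed equivalence on \<open>X\<^sup>\<sharp>\<close> containing \<open>\<parallel>\<close> that separates \<open>Y\<close> from \<open>Z\<close>.
\<close>

lemma ultrafilter_on_mono:
  "ultrafilter_on X p \<Longrightarrow> A \<in> p \<Longrightarrow> A \<subseteq> B \<Longrightarrow> B \<subseteq> X \<Longrightarrow> B \<in> p"
  unfolding ultrafilter_on_def by blast

lemma ultrafilter_on_Int: "ultrafilter_on X p \<Longrightarrow> A \<in> p \<Longrightarrow> B \<in> p \<Longrightarrow> A \<inter> B \<in> p"
  unfolding ultrafilter_on_def by blast

lemma ultrafilter_on_carrier: "ultrafilter_on X p \<Longrightarrow> X \<in> p"
  unfolding ultrafilter_on_def by blast

lemma ultrafilter_on_Diff: "ultrafilter_on X p \<Longrightarrow> A \<subseteq> X \<Longrightarrow> A \<notin> p \<Longrightarrow> X - A \<in> p"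
  unfolding ultrafilter_on_def by blast

lemma ultrafilter_on_not_Diff:
  assumes "ultrafilter_on X p" "A \<in> p" shows "X - A \<notin> p"
proof
  assume "X - A \<in> p"
  then have "A \<inter> (X - A) \<in> p" using ultrafilter_on_Int assms by blast
  then show False using assms(1) unfolding ultrafilter_on_def by simp
qed

subsection \<open>Dyadic interpolation\<close>

text \<open>
  \<open>dyadic_interp h a b n k\<close> is the value at \<open>k/2\<^sup>n\<close> of the scale obtained from \<open>a\<close> (at 0) and
  \<open>b\<close> (at 1) by repeatedly inserting \<open>h x y\<close> midway between neighbours \<open>x\<close>, \<open>y\<close>.
  Arguments \<open>k > 2\<^sup>n\<close> are junk.
\<close>
primrec dyadic_interp :: "('b \<Rightarrow> 'b \<Rightarrow> 'b) \<Rightarrow> 'b \<Rightarrow> 'b \<Rightarrow> nat \<Rightarrow> nat \<Rightarrow> 'b" where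
  "dyadic_interp h a b 0 k = (if k = 0 then a else b)"
| "dyadic_interp h a b (Suc n) k =
     (if even k then dyadic_interp h a b n (k div 2)
      else h (dyadic_interp h a b n (k div 2)) (dyadic_interp h a b n (Suc (k div 2))))"

lemma dyadic_interp_double: "dyadic_interp h a b (Suc n) (2 * k) = dyadic_interp h a b n k"
  by simp

lemma dyadic_interp_odd:
  "dyadic_interp h a b (Suc n) (2 * k + 1) =
     h (dyadic_interp h a b n k) (dyadic_interp h a b n (Suc k))"
  by simp

lemma dyadic_interp_refine: "dyadic_interp h a b (n + m) (k * 2 ^ m) = dyadic_interp h a b n k"
proof (induction m arbitrary: k)
  case (Suc m)
  have "dyadic_interp h a b (n + Suc m) (k * 2 ^ Suc m) =
        dyadic_interp h a b (Suc (n + m)) (2 * (k * 2 ^ m))"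
    by (simp add: ac_simps)
  then show ?case using Suc by simp
qed simp

lemma dyadic_interp_adjacent:
  assumes split: "\<And>x y. P x y \<Longrightarrow> P x (h x y) \<and> P (h x y) y" and "P a b"
  shows "j < 2 ^ n \<Longrightarrow> P (dyadic_interp h a b n j) (dyadic_interp h a b n (Suc j))"
proof (induction n arbitrary: j)
  case 0
  then show ?case using \<open>P a b\<close> by simp
next
  case (Suc n)
  obtain i where "j = 2 * i \<or> j = 2 * i + 1" by (metis oddE evenE)
  then show ?case
  proof
    assume j: "j = 2 * i"
    then have "P (dyadic_interp h a b n i) (dyadic_interp h a b n (Suc i))" using Suc by simp
    moreover have "Suc j = 2 * i + 1" using j by simp
    ultimately show ?thesis using j split by (simp only: dyadic_interp_double dyadic_interp_odd)
  next
    assume j: "j = 2 * i + 1"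
    then have "P (dyadic_interp h a b n i) (dyadic_interp h a b n (Suc i))" using Suc by simp
    moreover have "Suc j = 2 * Suc i" using j by simp
    ultimately show ?thesis using j split by (simp only: dyadic_interp_double dyadic_interp_odd)
  qed
qed

lemma dyadic_interp_chain:
  assumes "\<And>x y. P x y \<Longrightarrow> P x (h x y) \<and> P (h x y) y" "P a b"
    and trans: "\<And>x y z. P x y \<Longrightarrow> P y z \<Longrightarrow> P x z"
  shows "k < l \<Longrightarrow> l \<le> 2 ^ n \<Longrightarrow> P (dyadic_interp h a b n k) (dyadic_interp h a b n l)"
proof (induction l)
  case (Suc l)
  have step: "P (dyadic_interp h a b n l) (dyadic_interp h a b n (Suc l))"
    using dyadic_interp_adjacent[of P h, OF assms(1,2)] Suc.prems by simp
  show ?case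
  proof (cases "k = l")
    case False
    then have "P (dyadic_interp h a b n k) (dyadic_interp h a b n l)" using Suc by simp
    then show ?thesis using trans step by blast
  qed (use step in simp)
qed simp

lemma exists_nat_gt_le_add_one:
  fixes x :: real assumes "0 \<le> x" shows "\<exists>k::nat. x < real k \<and> real k \<le> x + 1"
proof -
  define k where "k = nat \<lfloor>x\<rfloor> + 1"
  have "real k = real_of_int \<lfloor>x\<rfloor> + 1" using assms unfolding k_def by simp
  then show ?thesis by (intro exI[of _ k]) linarith
qed

locale coarse_space =
  fixes X :: "'a set" and EE :: "('a \<times> 'a) set set"
  assumes ballean: "ballean X EE" and nonempty: "X \<noteq> {}"
begin

abbreviation cbounded :: "'a set \<Rightarrow> bool" where "cbounded Y \<equiv> bl_bounded X EE Y"

lemma entourage_subset: "E \<in> EE \<Longrightarrow> E \<subseteq> X \<times> X"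
  and Id_on_subset_entourage: "E \<in> EE \<Longrightarrow> Id_on X \<subseteq> E"
  and relcomp_entourage: "E \<in> EE \<Longrightarrow> F \<in> EE \<Longrightarrow> E O F \<in> EE"
  and converse_entourage: "E \<in> EE \<Longrightarrow> E\<inverse> \<in> EE"
  and entourage_downclosed: "E \<in> EE \<Longrightarrow> Id_on X \<subseteq> F \<Longrightarrow> F \<subseteq> E \<Longrightarrow> F \<in> EE"
  and entourage_connecting: "x \<in> X \<Longrightarrow> y \<in> X \<Longrightarrow> \<exists>E\<in>EE. (x, y) \<in> E"
proof -
  note parts = conjunct1 conjunct2[THEN conjunct1] conjunct2[THEN conjunct2, THEN conjunct1]
    conjunct2[THEN conjunct2, THEN conjunct2, THEN conjunct1]
    conjunct2[THEN conjunct2, THEN conjunct2, THEN conjunct2]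
  note B = parts[OF ballean[unfolded ballean_def]]
  show "E \<in> EE \<Longrightarrow> E \<subseteq> X \<times> X" "E \<in> EE \<Longrightarrow> Id_on X \<subseteq> E" using B(1) by simp_all
  show "E \<in> EE \<Longrightarrow> F \<in> EE \<Longrightarrow> E O F \<in> EE" using B(2) by simp
  show "E \<in> EE \<Longrightarrow> E\<inverse> \<in> EE" using B(3) by simp
  show "E \<in> EE \<Longrightarrow> Id_on X \<subseteq> F \<Longrightarrow> F \<subseteq> E \<Longrightarrow> F \<in> EE" using B(4) by blast
  show "x \<in> X \<Longrightarrow> y \<in> X \<Longrightarrow> \<exists>E\<in>EE. (x, y) \<in> E" using B(5) by simp
qed

lemma Id_on_entourage: "Id_on X \<in> EE"
proof -
  obtain x where "x \<in> X" using nonempty by auto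
  then obtain E where "E \<in> EE" using entourage_connecting by blast
  then show ?thesis using entourage_downclosed[OF _ order_refl Id_on_subset_entourage] by blast
qed

lemma Un_entourage: assumes "E \<in> EE" "F \<in> EE" shows "E \<union> F \<in> EE"
proof -
  have "E \<union> F \<subseteq> E O F"
  proof
    fix z assume "z \<in> E \<union> F"
    moreover obtain a b where z: "z = (a, b)" by force
    ultimately consider "(a, b) \<in> E" "b \<in> X" | "(a, b) \<in> F" "a \<in> X"
      using entourage_subset assms by blast
    then show "z \<in> E O F"
      using Id_on_subset_entourage[OF assms(1)] Id_on_subset_entourage[OF assms(2)] z
      by cases blast+
  qed
  moreover have "Id_on X \<subseteq> E \<union> F" using Id_on_subset_entourage[OF assms(1)] by blast
  ultimately show ?thesis using entourage_downclosed[OF relcomp_entourage[OF assms]] by blast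
qed

lemma subset_Image_entourage: "E \<in> EE \<Longrightarrow> A \<subseteq> X \<Longrightarrow> A \<subseteq> E `` A"
  using Id_on_subset_entourage by blast

lemma Image_entourage_subset: "E \<in> EE \<Longrightarrow> E `` A \<subseteq> X"
  using entourage_subset by blast

lemma cbounded_empty: "cbounded {}"
  unfolding bl_bounded_def by simp

lemma cbounded_subset: "cbounded A \<Longrightarrow> B \<subseteq> A \<Longrightarrow> cbounded B"
  unfolding bl_bounded_def by blast

lemma cbounded_Image: assumes "cbounded A" "E \<in> EE" shows "cbounded (E `` A)"
proof (cases "A = {}")
  case False
  then obtain x F where "x \<in> X" "F \<in> EE" "A \<subseteq> F `` {x}"
    using assms unfolding bl_bounded_def by blast
  moreover have "E `` A \<subseteq> (F O E) `` {x}" using calculation by blast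
  ultimately show ?thesis
    unfolding bl_bounded_def using relcomp_entourage assms(2) Image_entourage_subset by blast
qed (simp add: cbounded_empty)

lemma cbounded_Un: assumes "cbounded A" "cbounded B" shows "cbounded (A \<union> B)"
proof (cases "A = {}")
  case True
  then show ?thesis using assms(2) by simp
next
  case A: False
  show ?thesis
  proof (cases "B = {}")
    case True
    then show ?thesis using assms(1) by simp
  next
    case False
    obtain x E where x: "x \<in> X" "E \<in> EE" "A \<subseteq> E `` {x}"
      using assms(1) A unfolding bl_bounded_def by blast
    obtain y F where y: "y \<in> X" "F \<in> EE" "B \<subseteq> F `` {y}"
      using assms(2) False unfolding bl_bounded_def by blast
    obtain G where G: "G \<in> EE" "(x, y) \<in> G" using entourage_connecting x y by blast
    have "A \<union> B \<subseteq> (E \<union> G O F) `` {x}" using x(3) y(3) G(2) by blast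
    moreover have "E \<union> G O F \<in> EE" using Un_entourage relcomp_entourage x y G by blast
    moreover have "A \<union> B \<subseteq> X" using assms unfolding bl_bounded_def by blast
    ultimately show ?thesis using x(1) unfolding bl_bounded_def by blast
  qed
qed

lemma cbounded_UN_lessThan: "(\<And>k. k < (n::nat) \<Longrightarrow> cbounded (A k)) \<Longrightarrow> cbounded (\<Union>k<n. A k)"
proof (induction n)
  case (Suc n)
  have "(\<Union>k<Suc n. A k) = (\<Union>k<n. A k) \<union> A n" by (auto simp: lessThan_Suc)
  then show ?case using Suc cbounded_Un by simp
qed (simp add: cbounded_empty)

lemma exists_unbounded_ultrafilter:
  assumes G: "G \<subseteq> Pow X" "G \<noteq> {}" "\<forall>A\<in>G. \<forall>B\<in>G. A \<inter> B \<in> G" "\<forall>A\<in>G. \<not> cbounded A"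
  shows "\<exists>p. ultrafilter_on X p \<and> G \<subseteq> p \<and> (\<forall>P\<in>p. \<not> cbounded P)"
proof -
  define S where "S = {F. G \<subseteq> F \<and> F \<subseteq> Pow X \<and> (\<forall>A\<in>F. \<forall>B\<in>F. A \<inter> B \<in> F) \<and>
                           (\<forall>A\<in>F. \<not> cbounded A)}"
  have "\<forall>C\<in>chains S. \<exists>U\<in>S. \<forall>F\<in>C. F \<subseteq> U"
  proof
    fix C assume C: "C \<in> chains S"
    show "\<exists>U\<in>S. \<forall>F\<in>C. F \<subseteq> U"
    proof (cases "C = {}")
      case True
      have "G \<in> S" unfolding S_def using G by blast
      then show ?thesis using True by blast
    next
      case False
      have CS: "C \<subseteq> S" and ch: "\<forall>A\<in>C. \<forall>B\<in>C. A \<subseteq> B \<or> B \<subseteq> A"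
        using C unfolding chains_def chain_subset_def by auto
      have "\<Union>C \<in> S"
        unfolding S_def
      proof (intro CollectI conjI ballI)
        obtain F0 where "F0 \<in> C" using False by blast
        then show "G \<subseteq> \<Union>C" using CS unfolding S_def by blast
        show "\<Union>C \<subseteq> Pow X" using CS unfolding S_def by blast
        show "\<not> cbounded A" if "A \<in> \<Union>C" for A using that CS unfolding S_def by blast
        fix A B assume "A \<in> \<Union>C" "B \<in> \<Union>C"
        then obtain FA FB where F: "FA \<in> C" "FB \<in> C" "A \<in> FA" "B \<in> FB" by blast
        then have "FA \<subseteq> FB \<or> FB \<subseteq> FA" using ch by blast
        then show "A \<inter> B \<in> \<Union>C" using F CS unfolding S_def by blast
      qed
      then show ?thesis by blast
    qed
  qed
  from Zorn_Lemma2[OF this] obtain M where "M \<in> S" and M_max: "\<forall>F\<in>S. M \<subseteq> F \<longrightarrow> F = M"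
    by blast
  then have MG: "G \<subseteq> M" and MX: "M \<subseteq> Pow X" and M_Int: "\<forall>A\<in>M. \<forall>B\<in>M. A \<inter> B \<in> M"
    and M_unbd: "\<forall>A\<in>M. \<not> cbounded A" unfolding S_def by auto
  have M_add: "D \<in> M" if D: "D \<subseteq> X" "\<forall>C\<in>M. \<not> cbounded (C \<inter> D)" for D
  proof -
    define F where "F = {B. B \<subseteq> X \<and> (\<exists>C\<in>M. C \<inter> D \<subseteq> B)}"
    have "F \<in> S" unfolding S_def
    proof (intro CollectI conjI ballI)
      show "G \<subseteq> F" using MG MX unfolding F_def by blast
      show "F \<subseteq> Pow X" unfolding F_def by blast
      fix A assume "A \<in> F"
      then obtain C where "C \<in> M" "C \<inter> D \<subseteq> A" unfolding F_def by blast
      then show "\<not> cbounded A" using D cbounded_subset by blast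
    next
      fix A B assume "A \<in> F" "B \<in> F"
      then obtain C1 C2 where "C1 \<in> M" "C1 \<inter> D \<subseteq> A" "A \<subseteq> X" "C2 \<in> M" "C2 \<inter> D \<subseteq> B" "B \<subseteq> X"
        unfolding F_def by blast
      moreover from this have "C1 \<inter> C2 \<in> M" using M_Int by blast
      ultimately show "A \<inter> B \<in> F" unfolding F_def by blast
    qed
    moreover have "M \<subseteq> F" unfolding F_def using MX by blast
    ultimately have "F = M" using M_max by blast
    moreover have "D \<in> F" unfolding F_def using D MG G(2) by blast
    ultimately show ?thesis by simp
  qed
  have M_mono: "B \<in> M" if "A \<in> M" "A \<subseteq> B" "B \<subseteq> X" for A B
  proof (rule M_add)
    show "\<forall>C\<in>M. \<not> cbounded (C \<inter> B)"
    proof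
      fix C assume "C \<in> M"
      then have "\<not> cbounded (C \<inter> A)" using M_Int M_unbd that by blast
      then show "\<not> cbounded (C \<inter> B)" using that cbounded_subset[of "C \<inter> B" "C \<inter> A"] by blast
    qed
  qed fact
  have "ultrafilter_on X M" unfolding ultrafilter_on_def
  proof (intro conjI ballI allI impI)
    show "M \<subseteq> Pow X" by fact
    show "X \<in> M" using G(2) M_mono MG MX by blast
    show "{} \<notin> M" using M_unbd cbounded_empty by blast
    show "A \<inter> B \<in> M" if "A \<in> M" "B \<in> M" for A B using M_Int that by blast
    show "B \<in> M" if "A \<in> M" "A \<subseteq> B \<and> B \<subseteq> X" for A B using M_mono that by blast
  next
    fix A assume AX: "A \<subseteq> X"
    show "A \<in> M \<or> X - A \<in> M"
    proof (rule ccontr)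
      assume "\<not> (A \<in> M \<or> X - A \<in> M)"
      then obtain C1 C2 where C: "C1 \<in> M" "cbounded (C1 \<inter> A)" "C2 \<in> M" "cbounded (C2 \<inter> (X - A))"
        using M_add[of A] M_add[of "X - A"] AX by blast
      have "C1 \<inter> C2 \<subseteq> (C1 \<inter> A) \<union> (C2 \<inter> (X - A))" using C(1) MX by blast
      then have "cbounded (C1 \<inter> C2)" using cbounded_Un C cbounded_subset by blast
      then show False using M_Int M_unbd C by blast
    qed
  qed
  then show ?thesis using MG M_unbd by blast
qed

subsection \<open>Asymptotic disjointness\<close>

abbreviation asdisj :: "'a set \<Rightarrow> 'a set \<Rightarrow> bool" where
  "asdisj A B \<equiv> asymp_disjoint X EE A B"

abbreviation asymp_within :: "'a set \<Rightarrow> 'a set \<Rightarrow> bool" where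
  "asymp_within A B \<equiv> asdisj A (X - B)"

lemma asymp_disjoint_sym: "asdisj A B \<Longrightarrow> asdisj B A"
  unfolding asymp_disjoint_def by (simp add: Int_commute)

lemma asymp_disjoint_mono: "asdisj A B \<Longrightarrow> A' \<subseteq> A \<Longrightarrow> B' \<subseteq> B \<Longrightarrow> asdisj A' B'"
  unfolding asymp_disjoint_def
proof
  fix E assume "\<forall>E\<in>EE. cbounded (E `` A \<inter> E `` B)" "A' \<subseteq> A" "B' \<subseteq> B" "E \<in> EE"
  moreover have "E `` A' \<inter> E `` B' \<subseteq> E `` A \<inter> E `` B" using calculation by blast
  ultimately show "cbounded (E `` A' \<inter> E `` B')" using cbounded_subset by blast
qed

lemma asymp_disjoint_Un_left: "asdisj A C \<Longrightarrow> asdisj B C \<Longrightarrow> asdisj (A \<union> B) C"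
  unfolding asymp_disjoint_def by (simp add: Image_Un Int_Un_distrib2 cbounded_Un)

lemma asymp_disjoint_Un_right: "asdisj C A \<Longrightarrow> asdisj C B \<Longrightarrow> asdisj C (A \<union> B)"
  using asymp_disjoint_Un_left asymp_disjoint_sym by blast

lemma asymp_disjoint_Int_cbounded: "asdisj A B \<Longrightarrow> cbounded (A \<inter> B \<inter> X)"
  unfolding asymp_disjoint_def using Id_on_entourage
  by (force intro: cbounded_subset)

lemma asymp_disjoint_if_asymp_nbhd:
  assumes "asymp_nbhd X EE W S" "T \<inter> W = {}" shows "asdisj T S"
  unfolding asymp_disjoint_def
proof
  fix E assume E: "E \<in> EE"
  define F where "F = E O E\<inverse>"
  have "F \<in> EE" unfolding F_def using E converse_entourage relcomp_entourage by blast
  then have "cbounded (E `` (F `` S - W))"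
    using assms(1) E cbounded_Image unfolding asymp_nbhd_def by blast
  moreover have "E `` T \<inter> E `` S \<subseteq> E `` (F `` S - W)"
    using assms(2) unfolding F_def by blast
  ultimately show "cbounded (E `` T \<inter> E `` S)" using cbounded_subset by blast
qed

lemma asymp_within_trans: "asymp_within A B \<Longrightarrow> asymp_within B C \<Longrightarrow> asymp_within A C"
  unfolding asymp_disjoint_def
proof
  fix E assume "\<forall>E\<in>EE. cbounded (E `` A \<inter> E `` (X - B))" "\<forall>E\<in>EE. cbounded (E `` B \<inter> E `` (X - C))"
    and "E \<in> EE"
  then have "cbounded ((E `` A \<inter> E `` (X - B)) \<union> (E `` B \<inter> E `` (X - C)))"
    using cbounded_Un by blast
  then show "cbounded (E `` A \<inter> E `` (X - C))" by (rule cbounded_subset) blast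
qed

subsection \<open>The corona\<close>

abbreviation sh :: "'a set set set" where "sh \<equiv> sharp X EE"
abbreviation TT :: "'a set set topology" where "TT \<equiv> sharp_topology X EE"

lemma sharp_ultrafilter: "p \<in> sh \<Longrightarrow> ultrafilter_on X p"
  unfolding sharp_def betaX_def by blast

lemma sharp_unbounded: "p \<in> sh \<Longrightarrow> A \<in> p \<Longrightarrow> \<not> cbounded A"
  unfolding sharp_def by blast

lemma exists_sharp: assumes "\<not> cbounded W" "W \<subseteq> X" shows "\<exists>p\<in>sh. W \<in> p"
proof -
  have "\<exists>p. ultrafilter_on X p \<and> {W} \<subseteq> p \<and> (\<forall>P\<in>p. \<not> cbounded P)"
    by (rule exists_unbounded_ultrafilter) (use assms in auto)
  then show ?thesis unfolding sharp_def betaX_def by blast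
qed

lemma topspace_sharp_topology: "topspace TT = sh"
proof -
  let ?B = "{{p \<in> betaX X. A \<in> p} | A. A \<subseteq> X}"
  have "sh \<subseteq> \<Union>?B"
  proof
    fix p assume "p \<in> sh"
    then have "p \<in> {q \<in> betaX X. X \<in> q}"
      using sharp_ultrafilter ultrafilter_on_carrier unfolding sharp_def by blast
    moreover have "{q \<in> betaX X. X \<in> q} \<in> ?B" by blast
    ultimately show "p \<in> \<Union>?B" by (rule UnionI[rotated])
  qed
  then show ?thesis
    unfolding sharp_topology_def beta_topology_def topspace_subtopology
      topology_generated_by_topspace by blast
qed

lemma openin_sharp_basic: assumes "A \<subseteq> X" shows "openin TT {r \<in> sh. A \<in> r}"
proof -
  have "openin (beta_topology X) {p \<in> betaX X. A \<in> p}"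
    unfolding beta_topology_def openin_topology_generated_by_iff
    by (rule generate_topology_on.Basis) (use assms in blast)
  then have "openin TT ({p \<in> betaX X. A \<in> p} \<inter> sh)"
    unfolding sharp_topology_def by (rule openin_subtopology_Int)
  moreover have "{p \<in> betaX X. A \<in> p} \<inter> sh = {r \<in> sh. A \<in> r}" unfolding sharp_def by blast
  ultimately show ?thesis by simp
qed

lemma generate_topology_on_beta_basic:
  assumes "generate_topology_on {{p \<in> betaX X. A \<in> p} | A. A \<subseteq> X} s"
  shows "\<forall>p\<in>s. p \<in> betaX X \<longrightarrow> (\<exists>A. A \<subseteq> X \<and> A \<in> p \<and> {r \<in> betaX X. A \<in> r} \<subseteq> s)"
  using assms
proof (induction rule: generate_topology_on.induct)
  case (Int a b)
  show ?case
  proof (intro ballI impI)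
    fix p assume p: "p \<in> a \<inter> b" "p \<in> betaX X"
    obtain A1 where A1: "A1 \<subseteq> X" "A1 \<in> p" "{r \<in> betaX X. A1 \<in> r} \<subseteq> a"
      using Int.IH(1) p by blast
    obtain A2 where A2: "A2 \<subseteq> X" "A2 \<in> p" "{r \<in> betaX X. A2 \<in> r} \<subseteq> b"
      using Int.IH(2) p by blast
    have "A1 \<inter> A2 \<in> p" using ultrafilter_on_Int A1(2) A2(2) p(2) unfolding betaX_def by blast
    moreover have "{r \<in> betaX X. A1 \<inter> A2 \<in> r} \<subseteq> a \<inter> b"
    proof
      fix r assume r: "r \<in> {r \<in> betaX X. A1 \<inter> A2 \<in> r}"
      then have "ultrafilter_on X r" "A1 \<inter> A2 \<in> r" unfolding betaX_def by auto
      then have "A1 \<in> r" "A2 \<in> r" using ultrafilter_on_mono A1(1) A2(1) by blast+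
      then show "r \<in> a \<inter> b" using A1(3) A2(3) r by auto
    qed
    ultimately show "\<exists>A. A \<subseteq> X \<and> A \<in> p \<and> {r \<in> betaX X. A \<in> r} \<subseteq> a \<inter> b"
      using A1(1) by blast
  qed
next
  case (UN K)
  show ?case
  proof (intro ballI impI)
    fix p assume "p \<in> \<Union>K" "p \<in> betaX X"
    then obtain k where "k \<in> K" "p \<in> k" by auto
    then obtain A where "A \<subseteq> X" "A \<in> p" "{r \<in> betaX X. A \<in> r} \<subseteq> k"
      using UN.IH \<open>p \<in> betaX X\<close> by meson
    then show "\<exists>A. A \<subseteq> X \<and> A \<in> p \<and> {r \<in> betaX X. A \<in> r} \<subseteq> \<Union>K"
      using \<open>k \<in> K\<close> by blast
  qed
next
  case (Basis s)
  then obtain A where "s = {p \<in> betaX X. A \<in> p}" "A \<subseteq> X" by auto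
  then show ?case by auto
qed simp

lemma openin_sharp_topology_basic:
  assumes "openin TT S" "p \<in> S" shows "\<exists>A\<subseteq>X. A \<in> p \<and> {r \<in> sh. A \<in> r} \<subseteq> S"
proof -
  obtain s where s: "openin (beta_topology X) s" "S = s \<inter> sh"
    using assms(1) unfolding sharp_topology_def openin_subtopology by blast
  have "p \<in> s" "p \<in> betaX X" using assms(2) s(2) unfolding sharp_def by auto
  then obtain A where "A \<subseteq> X" "A \<in> p" "{r \<in> betaX X. A \<in> r} \<subseteq> s"
    using generate_topology_on_beta_basic s(1)
    unfolding beta_topology_def openin_topology_generated_by_iff by meson
  then show ?thesis using s(2) unfolding sharp_def by blast
qed

lemma closedin_sharp_prod_iff:
  assumes "R \<subseteq> sh \<times> sh"
  shows "closedin (prod_topology TT TT) R \<longleftrightarrow>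
    (\<forall>p\<in>sh. \<forall>q\<in>sh. (p, q) \<notin> R \<longrightarrow> (\<exists>A B. A \<subseteq> X \<and> B \<subseteq> X \<and> A \<in> p \<and> B \<in> q \<and>
       (\<forall>p'\<in>sh. \<forall>q'\<in>sh. A \<in> p' \<longrightarrow> B \<in> q' \<longrightarrow> (p', q') \<notin> R)))"
proof
  assume "closedin (prod_topology TT TT) R"
  then have R_open: "openin (prod_topology TT TT) (sh \<times> sh - R)"
    unfolding closedin_def topspace_prod_topology topspace_sharp_topology by auto
  show "\<forall>p\<in>sh. \<forall>q\<in>sh. (p, q) \<notin> R \<longrightarrow> (\<exists>A B. A \<subseteq> X \<and> B \<subseteq> X \<and> A \<in> p \<and> B \<in> q \<and>
       (\<forall>p'\<in>sh. \<forall>q'\<in>sh. A \<in> p' \<longrightarrow> B \<in> q' \<longrightarrow> (p', q') \<notin> R))"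
  proof (intro ballI impI)
    fix p q assume "p \<in> sh" "q \<in> sh" "(p, q) \<notin> R"
    then have "(p, q) \<in> sh \<times> sh - R" by simp
    then obtain U V where UV: "openin TT U" "openin TT V" "p \<in> U" "q \<in> V" "U \<times> V \<subseteq> sh \<times> sh - R"
      using R_open unfolding openin_prod_topology_alt by meson
    obtain A where A: "A \<subseteq> X" "A \<in> p" "{r \<in> sh. A \<in> r} \<subseteq> U"
      using openin_sharp_topology_basic[OF UV(1,3)] by meson
    obtain B where B: "B \<subseteq> X" "B \<in> q" "{r \<in> sh. B \<in> r} \<subseteq> V"
      using openin_sharp_topology_basic[OF UV(2,4)] by meson
    have "(p', q') \<notin> R" if "p' \<in> sh" "q' \<in> sh" "A \<in> p'" "B \<in> q'" for p' q'
      using that A(3) B(3) UV(5) by blast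
    then show "\<exists>A B. A \<subseteq> X \<and> B \<subseteq> X \<and> A \<in> p \<and> B \<in> q \<and>
       (\<forall>p'\<in>sh. \<forall>q'\<in>sh. A \<in> p' \<longrightarrow> B \<in> q' \<longrightarrow> (p', q') \<notin> R)"
      using A(1,2) B(1,2) by blast
  qed
next
  assume sep: "\<forall>p\<in>sh. \<forall>q\<in>sh. (p, q) \<notin> R \<longrightarrow> (\<exists>A B. A \<subseteq> X \<and> B \<subseteq> X \<and> A \<in> p \<and> B \<in> q \<and>
       (\<forall>p'\<in>sh. \<forall>q'\<in>sh. A \<in> p' \<longrightarrow> B \<in> q' \<longrightarrow> (p', q') \<notin> R))"
  have "openin (prod_topology TT TT) (sh \<times> sh - R)"
    unfolding openin_prod_topology_alt
  proof (intro allI impI)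
    fix p q assume pq: "(p, q) \<in> sh \<times> sh - R"
    then have "p \<in> sh" "q \<in> sh" "(p, q) \<notin> R" by auto
    from sep[rule_format, OF this] obtain A B where AB: "A \<subseteq> X" "B \<subseteq> X" "A \<in> p" "B \<in> q"
      "\<forall>p'\<in>sh. \<forall>q'\<in>sh. A \<in> p' \<longrightarrow> B \<in> q' \<longrightarrow> (p', q') \<notin> R"
      by blast
    have "{r \<in> sh. A \<in> r} \<times> {r \<in> sh. B \<in> r} \<subseteq> sh \<times> sh - R" using AB(5) by blast
    then show "\<exists>U V. openin TT U \<and> openin TT V \<and> p \<in> U \<and> q \<in> V \<and> U \<times> V \<subseteq> sh \<times> sh - R"
      using openin_sharp_basic[OF AB(1)] openin_sharp_basic[OF AB(2)] AB(3,4) pq by blast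
  qed
  then show "closedin (prod_topology TT TT) R"
    using assms unfolding closedin_def topspace_prod_topology topspace_sharp_topology by blast
qed

lemma corona_rel_subset:
  assumes "equiv sh R" "closedin (prod_topology TT TT) R" "parallel_rel X EE \<subseteq> R"
  shows "corona_rel X EE \<subseteq> R"
  unfolding corona_rel_def by (rule Inter_lower) (use assms in simp)

lemma corona_singleton_imp_corona_rel:
  assumes "corona X EE = {c}" "p \<in> sh" "q \<in> sh" shows "(p, q) \<in> corona_rel X EE"
proof -
  have "(q, q) \<in> corona_rel X EE"
    unfolding corona_rel_def using assms(3) by (auto simp: equiv_def refl_on_def)
  moreover have "corona_rel X EE `` {p} \<in> corona X EE" "corona_rel X EE `` {q} \<in> corona X EE"
    unfolding corona_def using assms(2,3) by (auto intro: quotientI)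
  then have "corona_rel X EE `` {q} = corona_rel X EE `` {p}" using assms(1) by auto
  ultimately show ?thesis by auto
qed

lemma corona_singletonI:
  assumes "sh \<noteq> {}"
    and "\<And>R. equiv sh R \<Longrightarrow> closedin (prod_topology TT TT) R \<Longrightarrow> parallel_rel X EE \<subseteq> R \<Longrightarrow>
      sh \<times> sh \<subseteq> R"
  shows "\<exists>c. corona X EE = {c}"
proof -
  have "equiv sh (sh \<times> sh)" unfolding equiv_def refl_on_def sym_def trans_def by auto
  moreover have "closedin (prod_topology TT TT) (sh \<times> sh)"
    using closedin_topspace[of "prod_topology TT TT"]
    unfolding topspace_prod_topology topspace_sharp_topology .
  moreover have "parallel_rel X EE \<subseteq> sh \<times> sh" unfolding parallel_rel_def by auto
  ultimately have "corona_rel X EE \<subseteq> sh \<times> sh" by (rule corona_rel_subset)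
  moreover have "sh \<times> sh \<subseteq> corona_rel X EE"
    unfolding corona_rel_def by (rule Inter_greatest) (use assms(2) in simp)
  ultimately have "corona_rel X EE = sh \<times> sh" by (rule equalityI)
  moreover have "(sh \<times> sh) `` {p} = sh" if "p \<in> sh" for p using that by auto
  ultimately have "corona X EE = {sh}"
    unfolding corona_def quotient_def using assms(1) by auto
  then show ?thesis by blast
qed

subsection \<open>Ultranormal balleans\<close>

lemma exists_parallel_into:
  assumes r: "r \<in> sh" and E: "E \<in> EE" and EA: "E `` A \<in> r" and A: "A \<subseteq> X"
  shows "\<exists>s\<in>sh. A \<in> s \<and> (r, s) \<in> parallel_rel X EE"
proof -
  have ur: "ultrafilter_on X r" using sharp_ultrafilter r .
  define G where "G = {B. B \<subseteq> X \<and> (\<exists>R\<in>r. A \<inter> E\<inverse> `` R \<subseteq> B)}"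
  have AG: "A \<in> G" unfolding G_def using A ultrafilter_on_carrier[OF ur] by blast
  have "\<exists>s. ultrafilter_on X s \<and> G \<subseteq> s \<and> (\<forall>P\<in>s. \<not> cbounded P)"
  proof (rule exists_unbounded_ultrafilter)
    show "G \<subseteq> Pow X" unfolding G_def by blast
    show "G \<noteq> {}" using AG by blast
    show "\<forall>B1\<in>G. \<forall>B2\<in>G. B1 \<inter> B2 \<in> G"
    proof (intro ballI)
      fix B1 B2 assume "B1 \<in> G" "B2 \<in> G"
      then obtain R1 R2 where R: "R1 \<in> r" "R2 \<in> r" "A \<inter> E\<inverse> `` R1 \<subseteq> B1"
        "A \<inter> E\<inverse> `` R2 \<subseteq> B2" "B1 \<subseteq> X" "B2 \<subseteq> X" unfolding G_def by blast
      have "R1 \<inter> R2 \<in> r" using ultrafilter_on_Int[OF ur R(1,2)] .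
      moreover have "A \<inter> E\<inverse> `` (R1 \<inter> R2) \<subseteq> B1 \<inter> B2" using R(3,4) by blast
      ultimately show "B1 \<inter> B2 \<in> G" unfolding G_def using R(5) by blast
    qed
    show "\<forall>B\<in>G. \<not> cbounded B"
    proof (intro ballI notI)
      fix B assume B: "B \<in> G" "cbounded B"
      then obtain R where R: "R \<in> r" "A \<inter> E\<inverse> `` R \<subseteq> B" unfolding G_def by blast
      have "cbounded (E `` (A \<inter> E\<inverse> `` R))"
        using cbounded_Image[OF cbounded_subset[OF B(2) R(2)] E] .
      moreover have "R \<inter> E `` A \<subseteq> E `` (A \<inter> E\<inverse> `` R)" by blast
      ultimately have "cbounded (R \<inter> E `` A)" by (rule cbounded_subset)
      moreover have "R \<inter> E `` A \<in> r" using ultrafilter_on_Int[OF ur R(1) EA] .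
      ultimately show False using sharp_unbounded[OF r] by blast
    qed
  qed
  then obtain s where s: "ultrafilter_on X s" "G \<subseteq> s" "\<forall>P\<in>s. \<not> cbounded P" by blast
  have "E `` Q \<in> r" if Q: "Q \<in> s" for Q
  proof (rule ccontr)
    assume "E `` Q \<notin> r"
    then have "X - E `` Q \<in> r" by (rule ultrafilter_on_Diff[OF ur Image_entourage_subset[OF E]])
    then have "A \<inter> E\<inverse> `` (X - E `` Q) \<in> G" unfolding G_def using A by blast
    then have "A \<inter> E\<inverse> `` (X - E `` Q) \<in> s" using s(2) by blast
    then have "Q \<inter> (A \<inter> E\<inverse> `` (X - E `` Q)) \<in> s" using ultrafilter_on_Int[OF s(1) Q] by blast
    moreover have "Q \<inter> (A \<inter> E\<inverse> `` (X - E `` Q)) = {}" by blast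
    ultimately show False using s(3) cbounded_empty by auto
  qed
  moreover have "s \<in> sh" unfolding sharp_def betaX_def using s(1,3) by blast
  ultimately have "(r, s) \<in> parallel_rel X EE" unfolding parallel_rel_def using r E by blast
  then show ?thesis using \<open>s \<in> sh\<close> AG s(2) by blast
qed

lemma ultranormal_corona_singleton:
  assumes ultra: "bl_ultranormal X EE" shows "\<exists>c. corona X EE = {c}"
proof (rule corona_singletonI)
  have "\<not> cbounded X" using ultra unfolding bl_ultranormal_def bl_unbounded_def by simp
  then show "sh \<noteq> {}" using exists_sharp[of X] by auto
next
  fix R assume R: "equiv sh R" "closedin (prod_topology TT TT) R" "parallel_rel X EE \<subseteq> R"
  show "sh \<times> sh \<subseteq> R"
  proof (rule ccontr)
    assume "\<not> sh \<times> sh \<subseteq> R"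
    then obtain p q where pq: "p \<in> sh" "q \<in> sh" "(p, q) \<notin> R" by blast
    have "R \<subseteq> sh \<times> sh" using R(1) unfolding equiv_def by blast
    from closedin_sharp_prod_iff[OF this, THEN iffD1, OF R(2), rule_format, OF pq]
    obtain A B where AB: "A \<subseteq> X" "B \<subseteq> X" "A \<in> p" "B \<in> q"
      and sep: "\<forall>p'\<in>sh. \<forall>q'\<in>sh. A \<in> p' \<longrightarrow> B \<in> q' \<longrightarrow> (p', q') \<notin> R" by blast
    have "\<forall>Y Z. Y \<subseteq> X \<and> Z \<subseteq> X \<and> \<not> cbounded Y \<and> \<not> cbounded Z \<longrightarrow> \<not> asdisj Y Z"
      using ultra unfolding bl_ultranormal_def by simp
    then have "\<not> asdisj A B"
      using AB(1,2) sharp_unbounded[OF pq(1) AB(3)] sharp_unbounded[OF pq(2) AB(4)] by simp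
    then obtain E where E: "E \<in> EE" "\<not> cbounded (E `` A \<inter> E `` B)"
      unfolding asymp_disjoint_def by blast
    have EX: "E `` A \<subseteq> X" "E `` B \<subseteq> X" using Image_entourage_subset[OF E(1)] by blast+
    then have "E `` A \<inter> E `` B \<subseteq> X" by blast
    from exists_sharp[OF E(2) this] obtain r where r: "r \<in> sh" "E `` A \<inter> E `` B \<in> r" ..
    have "E `` A \<in> r" "E `` B \<in> r"
      using ultrafilter_on_mono[OF sharp_ultrafilter[OF r(1)] r(2) Int_lower1 EX(1)]
        ultrafilter_on_mono[OF sharp_ultrafilter[OF r(1)] r(2) Int_lower2 EX(2)] .
    obtain sA where sA: "sA \<in> sh" "A \<in> sA" "(r, sA) \<in> R"
      using exists_parallel_into[OF r(1) E(1) \<open>E `` A \<in> r\<close> AB(1)] R(3) by blast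
    obtain sB where sB: "sB \<in> sh" "B \<in> sB" "(r, sB) \<in> R"
      using exists_parallel_into[OF r(1) E(1) \<open>E `` B \<in> r\<close> AB(2)] R(3) by blast
    have "sym R" "trans R" using R(1) unfolding equiv_def by simp_all
    then have "(sA, sB) \<in> R" using transD symD sA(3) sB(3) by metis
    then show False using sep sA(1,2) sB(1,2) by blast
  qed
qed

lemma slowly_oscillating_asymp_disjoint_levels:
  assumes so: "slowly_oscillating X EE f" and "a < b"
  shows "asdisj {x\<in>X. f x < a} {x\<in>X. f x > b}"
  unfolding asymp_disjoint_def
proof
  fix E assume E: "E \<in> EE"
  have "b - a > 0" using \<open>a < b\<close> by simp
  then obtain B where B: "cbounded B" "\<forall>x\<in>X - B. diam_less f (E\<inverse> `` {x}) (b - a)"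
    using so converse_entourage[OF E] unfolding slowly_oscillating_def by meson
  have "E `` {x\<in>X. f x < a} \<inter> E `` {x\<in>X. f x > b} \<subseteq> B"
  proof
    fix z assume "z \<in> E `` {x\<in>X. f x < a} \<inter> E `` {x\<in>X. f x > b}"
    then obtain y w where yw: "(y, z) \<in> E" "f y < a" "(w, z) \<in> E" "f w > b" by blast
    have "z \<in> X" using entourage_subset[OF E] yw(1) by blast
    show "z \<in> B"
    proof (rule ccontr)
      assume "z \<notin> B"
      then obtain d where d: "d < b - a" "\<forall>u\<in>E\<inverse> `` {z}. \<forall>v\<in>E\<inverse> `` {z}. \<bar>f u - f v\<bar> \<le> d"
        using B(2) \<open>z \<in> X\<close> unfolding diam_less_def by blast
      moreover have "y \<in> E\<inverse> `` {z}" "w \<in> E\<inverse> `` {z}" using yw by auto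
      ultimately have "\<bar>f w - f y\<bar> \<le> d" by blast
      then show False using d(1) yw(2,4) by linarith
    qed
  qed
  then show "cbounded (E `` {x\<in>X. f x < a} \<inter> E `` {x\<in>X. f x > b})"
    using cbounded_subset[OF B(1)] by blast
qed

text \<open>The constant at infinity is the supremum of the levels with bounded sub-level set.\<close>
lemma ultranormal_const_at_infinity:
  assumes ultra: "bl_ultranormal X EE" and "bounded_fun_on X f" and so: "slowly_oscillating X EE f"
  shows "const_at_infinity X EE f"
proof -
  have X_unbd: "\<not> cbounded X" using ultra unfolding bl_ultranormal_def bl_unbounded_def by simp
  have ultra_disj: "\<And>Y Z. Y \<subseteq> X \<Longrightarrow> Z \<subseteq> X \<Longrightarrow> \<not> cbounded Y \<Longrightarrow> \<not> cbounded Z \<Longrightarrow> \<not> asdisj Y Z"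
    using ultra unfolding bl_ultranormal_def by simp
  obtain M where M: "\<forall>x\<in>X. \<bar>f x\<bar> \<le> M" using \<open>bounded_fun_on X f\<close> unfolding bounded_fun_on_def by blast
  define S where "S = {a. cbounded {x\<in>X. f x < a}}"
  have "{x\<in>X. f x < - M - 1} = {}" using M by force
  then have "- M - 1 \<in> S" unfolding S_def mem_Collect_eq by (simp only: cbounded_empty)
  then have S_ne: "S \<noteq> {}" by blast
  have "a \<le> M" if "a \<in> S" for a
  proof (rule ccontr)
    assume "\<not> a \<le> M"
    then have "{x\<in>X. f x < a} = X" using M by force
    then show False using that X_unbd unfolding S_def by simp
  qed
  then have S_bdd: "bdd_above S" unfolding bdd_above_def by blast
  define c where "c = Sup S"
  have "cbounded {x\<in>X. \<bar>f x - c\<bar> > e}" if "e > 0" for e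
  proof -
    have "c - e < Sup S" using \<open>e > 0\<close> unfolding c_def by simp
    then obtain a where "a \<in> S" "c - e < a" using less_cSup_iff[OF S_ne S_bdd] by blast
    then have below: "cbounded {x\<in>X. f x < c - e}"
      using cbounded_subset[of "{x\<in>X. f x < a}" "{x\<in>X. f x < c - e}"] unfolding S_def by force
    have "c + e/2 \<notin> S"
    proof
      assume "c + e/2 \<in> S"
      then have "c + e/2 \<le> Sup S" using cSup_upper[OF _ S_bdd] by blast
      then show False using \<open>e > 0\<close> unfolding c_def by simp
    qed
    then have "\<not> cbounded {x\<in>X. f x < c + e/2}" unfolding S_def by simp
    moreover have "asdisj {x\<in>X. f x < c + e/2} {x\<in>X. f x > c + e}"
      using slowly_oscillating_asymp_disjoint_levels[OF so] \<open>e > 0\<close> by simp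
    ultimately have above: "cbounded {x\<in>X. f x > c + e}"
      using ultra_disj[of "{x\<in>X. f x < c + e/2}" "{x\<in>X. f x > c + e}"] by blast
    have "{x\<in>X. \<bar>f x - c\<bar> > e} \<subseteq> {x\<in>X. f x < c - e} \<union> {x\<in>X. f x > c + e}" by auto
    then show ?thesis using cbounded_subset[OF cbounded_Un[OF below above]] by blast
  qed
  then show ?thesis unfolding const_at_infinity_def by blast
qed

subsection \<open>Scales of asymptotically nested sets\<close>

definition asymp_nested :: "'a set \<Rightarrow> 'a set \<Rightarrow> bool" where
  "asymp_nested A B \<longleftrightarrow> A \<subseteq> B \<and> B \<subseteq> X \<and> asymp_within A B"

lemma asymp_nested_trans: "asymp_nested A B \<Longrightarrow> asymp_nested B C \<Longrightarrow> asymp_nested A C"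
  unfolding asymp_nested_def using asymp_within_trans[of A B C] by auto

lemma sharp_asymp_nested_mono:
  assumes "p \<in> sh" "asymp_nested A B" "A \<in> p" shows "B \<in> p"
  using assms ultrafilter_on_mono[OF sharp_ultrafilter] unfolding asymp_nested_def by blast

lemma exists_unbounded_asymp_nested:
  assumes "bl_unbounded X EE" "\<not> bl_ultranormal X EE"
  obtains A B where "asymp_nested A B" "\<not> cbounded A" "\<not> cbounded (X - B)"
proof -
  obtain Y Z where YZ: "Y \<subseteq> X" "Z \<subseteq> X" "\<not> cbounded Y" "\<not> cbounded Z" "asdisj Y Z"
    using assms unfolding bl_ultranormal_def by blast
  have "X - (X - Z) = Z" using YZ(2) by blast
  then have "asymp_nested (Y - Z) (X - Z)"
    using asymp_disjoint_mono[OF YZ(5)] YZ(1) unfolding asymp_nested_def by auto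
  moreover have "\<not> cbounded (Y - Z)"
  proof
    assume "cbounded (Y - Z)"
    moreover have "cbounded (Y \<inter> Z \<inter> X)" using asymp_disjoint_Int_cbounded[OF YZ(5)] .
    ultimately have "cbounded ((Y - Z) \<union> (Y \<inter> Z \<inter> X))" by (rule cbounded_Un)
    moreover have "(Y - Z) \<union> (Y \<inter> Z \<inter> X) = Y" using YZ(1) by blast
    ultimately show False using YZ(3) by simp
  qed
  ultimately show ?thesis using that YZ(4) \<open>X - (X - Z) = Z\<close> by simp
qed

end

locale normal_coarse_space = coarse_space +
  assumes normal: "bl_normal X EE"
begin

lemma asymp_nested_interpolate:
  assumes "asymp_nested A B" shows "\<exists>C. asymp_nested A C \<and> asymp_nested C B"
proof -
  have sub: "A \<subseteq> B" "B \<subseteq> X" and AB: "asymp_within A B"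
    using assms unfolding asymp_nested_def by auto
  have "asymp_separated X EE A (X - B)" using normal sub AB unfolding bl_normal_def by blast
  then obtain U V where UV: "U \<inter> V = {}" "asymp_nbhd X EE U A" "asymp_nbhd X EE V (X - B)"
    unfolding asymp_separated_def by blast
  have "asdisj (X - U) A" by (rule asymp_disjoint_if_asymp_nbhd[OF UV(2)]) auto
  then have AU: "asymp_within A U" by (rule asymp_disjoint_sym)
  have UB: "asymp_within U B" by (rule asymp_disjoint_if_asymp_nbhd[OF UV(3)]) (use UV(1) in auto)
  define C where "C = (U \<union> A) \<inter> B"
  have "asdisj A ((X - U) \<union> (X - B))" using asymp_disjoint_Un_right[OF AU AB] .
  then have AC: "asymp_within A C" by (rule asymp_disjoint_mono) (auto simp: C_def)
  have "asdisj (U \<union> A) (X - B)" using asymp_disjoint_Un_left[OF UB AB] .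
  then have CB: "asymp_within C B" by (rule asymp_disjoint_mono) (auto simp: C_def)
  have "A \<subseteq> C" "C \<subseteq> B" using sub unfolding C_def by auto
  then show ?thesis using sub AC CB unfolding asymp_nested_def by blast
qed

definition interpolant :: "'a set \<Rightarrow> 'a set \<Rightarrow> 'a set" where
  "interpolant A B = (SOME C. asymp_nested A C \<and> asymp_nested C B)"

lemma asymp_nested_interpolant:
  "asymp_nested A B \<Longrightarrow> asymp_nested A (interpolant A B) \<and> asymp_nested (interpolant A B) B"
  unfolding interpolant_def by (rule someI_ex) (rule asymp_nested_interpolate)

end

locale urysohn_setting = normal_coarse_space +
  fixes A B :: "'a set"
  assumes nested: "asymp_nested A B"
begin

definition scale :: "nat \<Rightarrow> nat \<Rightarrow> 'a set" where
  "scale n k = dyadic_interp interpolant A B n k"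

lemma scale_nested: "k < l \<Longrightarrow> l \<le> 2 ^ n \<Longrightarrow> asymp_nested (scale n k) (scale n l)"
  unfolding scale_def
  by (rule dyadic_interp_chain[OF asymp_nested_interpolant nested asymp_nested_trans])

lemma scale_refine: "scale (n + m) (k * 2 ^ m) = scale n k"
  unfolding scale_def by (rule dyadic_interp_refine)

lemma scale_double: "scale (Suc n) (2 * k) = scale n k"
  using scale_refine[of n 1 k] by (simp add: mult.commute)

lemma scale_0: "scale n 0 = A"
  using scale_refine[of 0 n 0] unfolding scale_def by simp

lemma scale_top: "scale n (2 ^ n) = B"
  using scale_refine[of 0 n 1] unfolding scale_def by simp

lemma scale_subset: assumes "k \<le> 2 ^ n" shows "scale n k \<subseteq> B"
proof (cases "k = 2 ^ n")
  case False
  then have "asymp_nested (scale n k) (scale n (2 ^ n))" using scale_nested assms by simp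
  then show ?thesis using scale_top unfolding asymp_nested_def by simp
qed (simp add: scale_top)

lemma scale_subset_X: "k \<le> 2 ^ n \<Longrightarrow> scale n k \<subseteq> X"
  using scale_subset nested unfolding asymp_nested_def by blast

lemma scale_nested_cross:
  assumes "j * 2 ^ n < k * 2 ^ m" "k \<le> 2 ^ n" shows "asymp_nested (scale m j) (scale n k)"
proof -
  have "scale m j = scale (m + n) (j * 2 ^ n)" using scale_refine by simp
  moreover have "scale n k = scale (m + n) (k * 2 ^ m)"
    using scale_refine[of n m k] by (simp add: add.commute)
  moreover have "k * 2 ^ m \<le> 2 ^ (m + n)" using assms(2) by (simp add: power_add mult.commute)
  ultimately show ?thesis using scale_nested assms(1) by simp
qed

subsection \<open>The Urysohn function of a scale\<close>

definition dyadic_levels :: "'a \<Rightarrow> real set" where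
  "dyadic_levels x = insert 1 {real k / 2 ^ n | k n. k \<le> 2 ^ n \<and> x \<in> scale n k}"

definition urysohn :: "'a \<Rightarrow> real" where
  "urysohn x = Inf (dyadic_levels x)"

lemma dyadic_levels_nonneg: "t \<in> dyadic_levels x \<Longrightarrow> 0 \<le> t"
  unfolding dyadic_levels_def by auto

lemma bdd_below_dyadic_levels: "bdd_below (dyadic_levels x)"
  unfolding bdd_below_def using dyadic_levels_nonneg by blast

lemma dyadic_levels_ne: "dyadic_levels x \<noteq> {}"
  unfolding dyadic_levels_def by auto

lemma urysohn_nonneg: "0 \<le> urysohn x"
  unfolding urysohn_def by (rule cInf_greatest[OF dyadic_levels_ne]) (rule dyadic_levels_nonneg)

lemma urysohn_le_1: "urysohn x \<le> 1"
  unfolding urysohn_def by (rule cInf_lower[OF _ bdd_below_dyadic_levels]) (simp add: dyadic_levels_def)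

lemma urysohn_bounded: "bounded_fun_on X urysohn"
  unfolding bounded_fun_on_def using urysohn_nonneg urysohn_le_1
  by (intro exI[of _ 1]) (simp add: abs_le_iff)

lemma urysohn_le_level: assumes "x \<in> scale n l" "l \<le> 2 ^ n" shows "urysohn x \<le> real l / 2 ^ n"
proof -
  have "real l / 2 ^ n \<in> dyadic_levels x" unfolding dyadic_levels_def using assms by blast
  then show ?thesis unfolding urysohn_def by (rule cInf_lower[OF _ bdd_below_dyadic_levels])
qed

lemma mem_scale_if_urysohn_less:
  assumes "urysohn x < real k / 2 ^ n" "k \<le> 2 ^ n" shows "x \<in> scale n k"
proof -
  obtain t where t: "t \<in> dyadic_levels x" "t < real k / 2 ^ n"
    using assms(1) cInf_less_iff[OF dyadic_levels_ne bdd_below_dyadic_levels]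
    unfolding urysohn_def by blast
  have "real k / 2 ^ n \<le> 1" using assms(2) by (simp add: divide_le_eq_1)
  then have "t \<noteq> 1" using t(2) by auto
  then obtain j m where jm: "t = real j / 2 ^ m" "j \<le> 2 ^ m" "x \<in> scale m j"
    using t(1) unfolding dyadic_levels_def by blast
  then have "real j / 2 ^ m < real k / 2 ^ n" using t(2) by simp
  then have "real j * 2 ^ n < real k * 2 ^ m" by (simp add: field_simps)
  then have "real (j * 2 ^ n) < real (k * 2 ^ m)" by simp
  then have "j * 2 ^ n < k * 2 ^ m" by linarith
  then have "asymp_nested (scale m j) (scale n k)" using scale_nested_cross assms(2) by blast
  then show ?thesis using jm(3) unfolding asymp_nested_def by blast
qed

lemma urysohn_eq_0: "x \<in> A \<Longrightarrow> urysohn x = 0"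
  using urysohn_le_level[of x 0 0] urysohn_nonneg[of x] scale_0 by simp

lemma urysohn_eq_1: "x \<notin> B \<Longrightarrow> urysohn x = 1"
proof -
  assume "x \<notin> B"
  then have "dyadic_levels x = {1}" unfolding dyadic_levels_def using scale_subset by auto
  then show ?thesis unfolding urysohn_def by simp
qed

text \<open>
  Off the bounded set where some \<open>E\<inverse>[scale n k]\<close> meets \<open>E\<inverse>[X - scale n (k+1)]\<close>, the function
  varies by at most \<open>2/2\<^sup>n\<close> on each ball \<open>E[x]\<close>.
\<close>
lemma urysohn_slowly_oscillating: "slowly_oscillating X EE urysohn"
  unfolding slowly_oscillating_def
proof (intro ballI allI impI)
  fix E :: "('a \<times> 'a) set" and e :: real assume E: "E \<in> EE" and "e > 0"
  obtain n where n: "(1/2::real) ^ n < e/2" using real_arch_pow_inv[of "e/2" "1/2"] \<open>e > 0\<close> by auto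
  have pos: "(0::real) < 2 ^ n" by simp
  have "2 / (2::real) ^ n < e" using n by (simp add: power_one_over field_simps)
  define D where "D = (\<Union>k<2 ^ n. E\<inverse> `` scale n k \<inter> E\<inverse> `` (X - scale n (Suc k)))"
  have "cbounded D" unfolding D_def
  proof (rule cbounded_UN_lessThan)
    fix k assume "k < (2::nat) ^ n"
    then have "asymp_within (scale n k) (scale n (Suc k))"
      using scale_nested[of k "Suc k" n] unfolding asymp_nested_def by simp
    then show "cbounded (E\<inverse> `` scale n k \<inter> E\<inverse> `` (X - scale n (Suc k)))"
      using converse_entourage[OF E] unfolding asymp_disjoint_def by blast
  qed
  have osc: "urysohn z \<le> urysohn y + 2 / 2 ^ n"
    if "x \<in> X - D" "y \<in> E `` {x}" "z \<in> E `` {x}" for x y z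
  proof (rule ccontr)
    assume far: "\<not> urysohn z \<le> urysohn y + 2 / 2 ^ n"
    obtain k :: nat where k: "urysohn y * 2 ^ n < real k" "real k \<le> urysohn y * 2 ^ n + 1"
      using exists_nat_gt_le_add_one[of "urysohn y * 2 ^ n"] urysohn_nonneg[of y] by auto
    have k1: "urysohn y < real k / 2 ^ n" using k(1) pos by (simp add: field_simps)
    have "real (Suc k) \<le> urysohn y * 2 ^ n + 2" using k(2) by simp
    then have "real (Suc k) / 2 ^ n \<le> (urysohn y * 2 ^ n + 2) / 2 ^ n"
      using pos by (simp add: divide_right_mono)
    also have "\<dots> = urysohn y + 2 / 2 ^ n" using pos by (simp add: add_divide_distrib)
    finally have k2: "real (Suc k) / 2 ^ n \<le> urysohn y + 2 / 2 ^ n" .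
    have "real (Suc k) / 2 ^ n < 1" using k2 far urysohn_le_1[of z] by linarith
    then have "real (Suc k) < 2 ^ n" using pos by (simp add: field_simps)
    then have "real (Suc k) < real ((2::nat) ^ n)" by simp
    then have kn: "Suc k < 2 ^ n" by linarith
    have "y \<in> scale n k" using mem_scale_if_urysohn_less[OF k1] kn by simp
    moreover have "z \<notin> scale n (Suc k)"
    proof
      assume "z \<in> scale n (Suc k)"
      moreover have "Suc k \<le> 2 ^ n" using kn by simp
      ultimately have "urysohn z \<le> real (Suc k) / 2 ^ n" by (rule urysohn_le_level)
      then show False using k2 far by linarith
    qed
    moreover have "z \<in> X" using that(3) entourage_subset[OF E] by blast
    moreover have "k < 2 ^ n" using kn by simp
    ultimately have "x \<in> D" unfolding D_def using that(2,3) by blast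
    then show False using that(1) by blast
  qed
  show "\<exists>D. cbounded D \<and> (\<forall>x\<in>X - D. diam_less urysohn (E `` {x}) e)"
  proof (intro exI conjI ballI)
    fix x assume "x \<in> X - D"
    show "diam_less urysohn (E `` {x}) e" unfolding diam_less_def
    proof (intro exI conjI ballI)
      fix y z assume "y \<in> E `` {x}" "z \<in> E `` {x}"
      then have "urysohn z \<le> urysohn y + 2 / 2 ^ n" "urysohn y \<le> urysohn z + 2 / 2 ^ n"
        using osc[OF \<open>x \<in> X - D\<close>] by blast+
      then show "\<bar>urysohn y - urysohn z\<bar> \<le> 2 / 2 ^ n" by linarith
    qed fact
  qed fact
qed

lemma urysohn_not_const_at_infinity:
  assumes "\<not> cbounded A" "\<not> cbounded (X - B)"
  shows "\<not> const_at_infinity X EE urysohn"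
proof
  assume "const_at_infinity X EE urysohn"
  then obtain c where c: "cbounded {x\<in>X. \<bar>urysohn x - c\<bar> > 1/3}"
    unfolding const_at_infinity_def by (metis zero_less_divide_1_iff zero_less_numeral)
  have "A \<subseteq> X" using nested unfolding asymp_nested_def by blast
  then have "A \<subseteq> {x\<in>X. \<bar>urysohn x - c\<bar> > 1/3} \<or> X - B \<subseteq> {x\<in>X. \<bar>urysohn x - c\<bar> > 1/3}"
    using urysohn_eq_0 urysohn_eq_1 by (cases "c \<ge> 1/2") auto
  then show False using cbounded_subset[OF c] assms by blast
qed

subsection \<open>A closed equivalence relation separating the ends of the scale\<close>

definition scale_rel :: "('a set set \<times> 'a set set) set" where
  "scale_rel = {(p, q). p \<in> sh \<and> q \<in> sh \<and> (\<forall>n k l. k < l \<and> l \<le> 2 ^ n \<longrightarrow>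
     (scale n k \<in> p \<longrightarrow> scale n l \<in> q) \<and> (scale n k \<in> q \<longrightarrow> scale n l \<in> p))}"

text \<open>Transitivity passes through the intermediate level \<open>(2k+1)/2\<^sup>n\<^sup>+\<^sup>1\<close>.\<close>
lemma equiv_scale_rel: "equiv sh scale_rel"
proof (rule equivI)
  show "scale_rel \<subseteq> sh \<times> sh" unfolding scale_rel_def by auto
  show "refl_on sh scale_rel"
    unfolding refl_on_def scale_rel_def using sharp_asymp_nested_mono scale_nested by blast
  show "sym scale_rel" unfolding sym_def scale_rel_def by auto
  show "trans scale_rel" unfolding trans_def
  proof (intro allI impI)
    fix p q w assume pq: "(p, q) \<in> scale_rel" and qw: "(q, w) \<in> scale_rel"
    have H1: "\<And>n k l. k < l \<Longrightarrow> l \<le> 2 ^ n \<Longrightarrow>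
        (scale n k \<in> p \<longrightarrow> scale n l \<in> q) \<and> (scale n k \<in> q \<longrightarrow> scale n l \<in> p)"
      using pq unfolding scale_rel_def by blast
    have H2: "\<And>n k l. k < l \<Longrightarrow> l \<le> 2 ^ n \<Longrightarrow>
        (scale n k \<in> q \<longrightarrow> scale n l \<in> w) \<and> (scale n k \<in> w \<longrightarrow> scale n l \<in> q)"
      using qw unfolding scale_rel_def by blast
    have "(scale n k \<in> p \<longrightarrow> scale n l \<in> w) \<and> (scale n k \<in> w \<longrightarrow> scale n l \<in> p)"
      if "k < l" "l \<le> 2 ^ n" for n k l
    proof -
      have lo: "2 * k < 2 * k + 1" "2 * k + 1 \<le> 2 ^ Suc n" and hi: "2 * k + 1 < 2 * l" "2 * l \<le> 2 ^ Suc n"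
        using that by auto
      show ?thesis using H1[OF lo] H2[OF lo] H1[OF hi] H2[OF hi] scale_double by metis
    qed
    then show "(p, w) \<in> scale_rel" using pq qw unfolding scale_rel_def by blast
  qed
qed

lemma closedin_scale_rel: "closedin (prod_topology TT TT) scale_rel"
proof (subst closedin_sharp_prod_iff, (auto simp: scale_rel_def)[1], intro ballI impI)
  fix p q assume pq: "p \<in> sh" "q \<in> sh" "(p, q) \<notin> scale_rel"
  then obtain n k l where nkl: "k < l" "l \<le> 2 ^ n"
    "\<not> ((scale n k \<in> p \<longrightarrow> scale n l \<in> q) \<and> (scale n k \<in> q \<longrightarrow> scale n l \<in> p))"
    unfolding scale_rel_def by blast
  have X: "scale n k \<subseteq> X" "scale n l \<subseteq> X" using scale_subset_X nkl by auto
  have sep1: "\<forall>p'\<in>sh. \<forall>q'\<in>sh. scale n k \<in> p' \<longrightarrow> X - scale n l \<in> q' \<longrightarrow> (p', q') \<notin> scale_rel"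
  proof (intro ballI impI notI)
    fix p' q' assume "q' \<in> sh" "scale n k \<in> p'" "X - scale n l \<in> q'" "(p', q') \<in> scale_rel"
    then have "scale n l \<in> q'" using nkl(1,2) unfolding scale_rel_def by blast
    then show False using ultrafilter_on_not_Diff[OF sharp_ultrafilter[OF \<open>q' \<in> sh\<close>]]
      \<open>X - scale n l \<in> q'\<close> by blast
  qed
  have sep2: "\<forall>p'\<in>sh. \<forall>q'\<in>sh. X - scale n l \<in> p' \<longrightarrow> scale n k \<in> q' \<longrightarrow> (p', q') \<notin> scale_rel"
  proof (intro ballI impI notI)
    fix p' q' assume "p' \<in> sh" "X - scale n l \<in> p'" "scale n k \<in> q'" "(p', q') \<in> scale_rel"
    then have "scale n l \<in> p'" using nkl(1,2) unfolding scale_rel_def by blast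
    then show False using ultrafilter_on_not_Diff[OF sharp_ultrafilter[OF \<open>p' \<in> sh\<close>]]
      \<open>X - scale n l \<in> p'\<close> by blast
  qed
  have "X - scale n l \<subseteq> X" by blast
  consider "scale n k \<in> p" "X - scale n l \<in> q" | "X - scale n l \<in> p" "scale n k \<in> q"
    using nkl(3) ultrafilter_on_Diff[OF sharp_ultrafilter[OF pq(1)] X(2)]
      ultrafilter_on_Diff[OF sharp_ultrafilter[OF pq(2)] X(2)] by blast
  then show "\<exists>A' B'. A' \<subseteq> X \<and> B' \<subseteq> X \<and> A' \<in> p \<and> B' \<in> q \<and>
      (\<forall>p'\<in>sh. \<forall>q'\<in>sh. A' \<in> p' \<longrightarrow> B' \<in> q' \<longrightarrow> (p', q') \<notin> scale_rel)"
  proof cases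
    case 1
    then show ?thesis using X(1) \<open>X - scale n l \<subseteq> X\<close> sep1 by blast
  next
    case 2
    then show ?thesis using X(1) \<open>X - scale n l \<subseteq> X\<close> sep2 by blast
  qed
qed

text \<open>If \<open>p \<parallel> q\<close> via \<open>E\<close>, a member \<open>scale n k\<close> of one point forces \<open>scale n l\<close> into the
  other: otherwise \<open>E[scale n k] \<inter> E[X - scale n l]\<close> would carry an ultrafilter of \<open>X\<^sup>\<sharp>\<close>.\<close>
lemma parallel_rel_subset_scale_rel: "parallel_rel X EE \<subseteq> scale_rel"
proof
  fix z assume "z \<in> parallel_rel X EE"
  then obtain p q E where z: "z = (p, q)" "p \<in> sh" "q \<in> sh" "E \<in> EE" and par: "\<forall>Q\<in>q. E `` Q \<in> p"
    unfolding parallel_rel_def by blast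
  have up: "ultrafilter_on X p" and uq: "ultrafilter_on X q" using sharp_ultrafilter z by auto
  have "(scale n k \<in> p \<longrightarrow> scale n l \<in> q) \<and> (scale n k \<in> q \<longrightarrow> scale n l \<in> p)"
    if kl: "k < l" "l \<le> 2 ^ n" for n k l
  proof -
    let ?K = "scale n k" and ?L = "scale n l"
    have "asymp_within ?K ?L" using scale_nested[OF kl] unfolding asymp_nested_def by blast
    then have bdd: "cbounded (E `` ?K \<inter> E `` (X - ?L))" using z(4) unfolding asymp_disjoint_def by blast
    have KX: "?K \<subseteq> X" and LX: "?L \<subseteq> X" using scale_subset_X kl by auto
    show ?thesis
    proof (intro conjI impI)
      assume "?K \<in> p"
      show "?L \<in> q"
      proof (rule ccontr)
        assume "?L \<notin> q"
        then have "E `` (X - ?L) \<in> p" using par ultrafilter_on_Diff[OF uq LX] by blast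
        then have "?K \<inter> E `` (X - ?L) \<in> p" using ultrafilter_on_Int[OF up \<open>?K \<in> p\<close>] by blast
        moreover have "?K \<inter> E `` (X - ?L) \<subseteq> E `` ?K \<inter> E `` (X - ?L)"
          using subset_Image_entourage[OF z(4) KX] by blast
        ultimately show False using sharp_unbounded[OF z(2)] cbounded_subset[OF bdd] by blast
      qed
    next
      assume "?K \<in> q"
      show "?L \<in> p"
      proof (rule ccontr)
        assume "?L \<notin> p"
        then have "X - ?L \<in> p" using ultrafilter_on_Diff[OF up LX] by blast
        then have "E `` ?K \<inter> (X - ?L) \<in> p" using par \<open>?K \<in> q\<close> ultrafilter_on_Int[OF up] by blast
        moreover have "E `` ?K \<inter> (X - ?L) \<subseteq> E `` ?K \<inter> E `` (X - ?L)"
          using subset_Image_entourage[OF z(4), of "X - ?L"] by blast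
        ultimately show False using sharp_unbounded[OF z(2)] cbounded_subset[OF bdd] by blast
      qed
    qed
  qed
  then show "z \<in> scale_rel" unfolding scale_rel_def using z(1-3) by blast
qed

lemma corona_not_singleton:
  assumes "\<not> cbounded A" "\<not> cbounded (X - B)"
  shows "\<nexists>c. corona X EE = {c}"
proof
  assume "\<exists>c. corona X EE = {c}"
  then obtain c where c: "corona X EE = {c}" ..
  have "A \<subseteq> X" using nested unfolding asymp_nested_def by blast
  then obtain p where p: "p \<in> sh" "A \<in> p" using exists_sharp assms(1) by blast
  obtain q where q: "q \<in> sh" "X - B \<in> q" using exists_sharp assms(2) by blast
  have "(p, q) \<in> scale_rel"
    using corona_singleton_imp_corona_rel[OF c p(1) q(1)]
      corona_rel_subset[OF equiv_scale_rel closedin_scale_rel parallel_rel_subset_scale_rel] by blast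
  then have "scale 0 1 \<in> q" using p(2) scale_0[of 0] unfolding scale_rel_def by auto
  then show False using q scale_top[of 0] ultrafilter_on_not_Diff[OF sharp_ultrafilter] by auto
qed

end

theorem theorem1:
  fixes X :: "'a set" and \<E> :: "('a \<times> 'a) set set"
  assumes "ballean X \<E>" and "bl_unbounded X \<E>" and "bl_normal X \<E>"
  shows "((\<forall>f. bounded_fun_on X f \<and> slowly_oscillating X \<E> f \<longrightarrow> const_at_infinity X \<E> f)
            \<longleftrightarrow> (\<exists>c. corona X \<E> = {c}))
       \<and> ((\<exists>c. corona X \<E> = {c}) \<longleftrightarrow> bl_ultranormal X \<E>)"
proof -
  have "X \<noteq> {}" using assms(2) unfolding bl_unbounded_def bl_bounded_def by auto
  have "normal_coarse_space X \<E>"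
    by (rule normal_coarse_space.intro[OF coarse_space.intro normal_coarse_space_axioms.intro])
      (fact assms(1,3) \<open>X \<noteq> {}\<close>)+
  then interpret normal_coarse_space X \<E> .
  show ?thesis
  proof (cases "bl_ultranormal X \<E>")
    case True
    then have "\<forall>f. bounded_fun_on X f \<and> slowly_oscillating X \<E> f \<longrightarrow> const_at_infinity X \<E> f"
      using ultranormal_const_at_infinity by blast
    then show ?thesis using True ultranormal_corona_singleton[OF True] by simp
  next
    case False
    obtain A B where AB: "asymp_nested A B" "\<not> cbounded A" "\<not> cbounded (X - B)"
      by (rule exists_unbounded_asymp_nested[OF assms(2) False])
    have "urysohn_setting X \<E> A B"
      by (rule urysohn_setting.intro[OF \<open>normal_coarse_space X \<E>\<close> urysohn_setting_axioms.intro])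
        (fact AB(1))
    then interpret urysohn_setting X \<E> A B .
    have "\<nexists>c. corona X \<E> = {c}" by (rule corona_not_singleton[OF AB(2,3)])
    have "\<not> (\<forall>f. bounded_fun_on X f \<and> slowly_oscillating X \<E> f \<longrightarrow> const_at_infinity X \<E> f)"
      using urysohn_not_const_at_infinity[OF AB(2,3)] urysohn_bounded urysohn_slowly_oscillating
      by blast
    then show ?thesis using False \<open>\<nexists>c. corona X \<E> = {c}\<close> by simp
  qed
qed

end
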